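(* Let $f:[0,1]\to\mathbb{R}$ with $f(0),f(1)\in\mathbb{Z}$ and let $n\in\mathbb{N}_+$. If $n\ge 3$, let also $\phi_n:[0,1]\to\mathbb{R}$ satisfy \[ \phi_n\left(\frac{k+1}{n}\right)-\phi_n\left(\frac{k}{n}\right)\ge \binom{n}{k+1}^{-1},\quad k=1,\dots,n-2. \] If $f$ is monotone increasing on $[0,1/n]$ and on $[1-1/n,1]$, and (when $n\ge3$) $f(x)-\phi_n(x)$ is monotone increasing on $[1/n,1-1/n]$, then $\widetilde{B}_n(f)$ is monotone increasing on $[0,1]$.
   Context: For $n\in\mathbb{N}_+$ and $f:[0,1]\to\mathbb{R}$, $\widetilde{B}_n(f)(x):=\sum_{k=0}^n \left[f\left(\frac{k}{n}\right)\binom{n}{k}\right]x^k(1-x)^{n-k}$, where $[\alpha]$ is the largest integer $\le\alpha$. Monotone increasing is meant in the non-strict sense. *)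

theory Defs
  imports "HOL-Analysis.Analysis"
begin

definition Btilde :: "nat \<Rightarrow> (real \<Rightarrow> real) \<Rightarrow> real \<Rightarrow> real" where
  "Btilde n f x = (\<Sum>k=0..n. real_of_int \<lfloor>f (real k / real n) * real (n choose k)\<rfloor>
                      * x ^ k * (1 - x) ^ (n - k))"

end

(* Btilde n f is the Bernstein sum with coefficients c k = floor (f (k/n) * (n choose k)).
   Its derivative is a Bernstein sum of degree n - 1 with coefficients
   (k+1) c (k+1) - (n-k) c k = (n-k) (n choose k) (c (k+1) / (n choose (k+1)) - c k / (n choose k)),
   so it suffices that the normalised coefficients c k / (n choose k) increase.  Rounding down
   lowers the k-th one below f (k/n) by less than 1 / (n choose k).  At the two end nodes nothing
   is lost because f 0 and f 1 are integers, and at an interior node the loss is absorbed by the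
   increment of phi, which is at least 1 / (n choose (k+1)). *)

theory Submission
  imports Defs
begin

lemma has_real_derivative_bernstein_sum:
  fixes a :: "nat \<Rightarrow> real"
  shows "((\<lambda>x. \<Sum>k=0..n. a k * x^k * (1-x)^(n-k)) has_real_derivative
      (\<Sum>k<n. (real (Suc k) * a (Suc k) - real (n-k) * a k) * x^k * (1-x)^(n - Suc k))) (at x)"
proof -
  have "((\<lambda>x. \<Sum>k=0..n. a k * x^k * (1-x)^(n-k)) has_real_derivative
      (\<Sum>k=0..n. real k * a k * x^(k-1) * (1-x)^(n-k))
      - (\<Sum>k=0..n. real (n-k) * a k * x^k * (1-x)^(n-k-1))) (at x)"
    unfolding sum_subtractf[symmetric]
    by (auto intro!: derivative_eq_intros simp: algebra_simps)
  moreover have "(\<Sum>k=0..n. real k * a k * x^(k-1) * (1-x)^(n-k))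
      = (\<Sum>k<n. real (Suc k) * a (Suc k) * x^k * (1-x)^(n - Suc k))"
  proof (cases n)
    case (Suc m)
    show ?thesis
      unfolding Suc atLeast0AtMost sum.atMost_Suc_shift lessThan_Suc_atMost by simp
  qed simp
  moreover have "(\<Sum>k=0..n. real (n-k) * a k * x^k * (1-x)^(n-k-1))
      = (\<Sum>k<n. real (n-k) * a k * x^k * (1-x)^(n - Suc k))"
    by (simp add: atLeast0AtMost lessThan_Suc_atMost[symmetric])
  ultimately show ?thesis
    by (simp add: sum_subtractf left_diff_distrib)
qed

lemma binomial_Suc_absorb:
  "(n - k) * (n choose k) = Suc k * (n choose Suc k)"
  using binomial_absorb_comp[of n k] binomial_absorption[of k n] by simp

lemma mono_on_bernstein_sum:
  fixes a :: "nat \<Rightarrow> real"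
  assumes "\<And>k. k < n \<Longrightarrow> a k / (n choose k) \<le> a (Suc k) / (n choose Suc k)"
  shows "mono_on {0..1} (\<lambda>x. \<Sum>k=0..n. a k * x^k * (1-x)^(n-k))"
proof (rule mono_onI)
  have coeff: "real (n-k) * a k \<le> real (Suc k) * a (Suc k)" if "k < n" for k
  proof -
    have pos: "real (n choose k) > 0" "real (n choose Suc k) > 0"
      using that by simp_all
    have "real (n-k) * a k = real (n-k) * real (n choose k) * (a k / (n choose k))"
      using pos by simp
    also have "\<dots> \<le> real (Suc k) * real (n choose Suc k) * (a (Suc k) / (n choose Suc k))"
      unfolding of_nat_mult[symmetric] binomial_Suc_absorb
      using assms[OF that] by (intro mult_left_mono) simp_all
    also have "\<dots> = real (Suc k) * a (Suc k)"
      using pos by simp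
    finally show ?thesis .
  qed
  fix r s :: real assume "r \<in> {0..1}" "s \<in> {0..1}" "r \<le> s"
  then show "(\<Sum>k=0..n. a k * r^k * (1-r)^(n-k)) \<le> (\<Sum>k=0..n. a k * s^k * (1-s)^(n-k))"
  proof (intro DERIV_nonneg_imp_nondecreasing[OF \<open>r \<le> s\<close>] exI conjI)
    fix x assume "r \<le> x" "x \<le> s"
    with \<open>r \<in> {0..1}\<close> \<open>s \<in> {0..1}\<close> coeff
    show "0 \<le> (\<Sum>k<n. (real (Suc k) * a (Suc k) - real (n-k) * a k) * x^k * (1-x)^(n - Suc k))"
      by (intro sum_nonneg mult_nonneg_nonneg) auto
  qed (rule has_real_derivative_bernstein_sum)
qed

lemma floor_mult_divide_le:
  fixes y c :: real
  assumes "c > 0"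
  shows "\<lfloor>y * c\<rfloor> / c \<le> y"
  using assms by (simp add: pos_divide_le_eq)

lemma floor_mult_divide_gt:
  fixes y c :: real
  assumes "c > 0"
  shows "y - 1 / c < \<lfloor>y * c\<rfloor> / c"
proof -
  have "(y * c - 1) / c < \<lfloor>y * c\<rfloor> / c"
    using assms by (intro divide_strict_right_mono) linarith+
  with assms show ?thesis
    by (simp add: diff_divide_distrib)
qed

lemma Ints_le_floor_mult_divide:
  fixes y z :: real
  assumes "z \<in> \<int>" and "z \<le> y" and "n > 0"
  shows "z \<le> \<lfloor>y * real n\<rfloor> / real n"
proof -
  from \<open>z \<in> \<int>\<close> obtain m where m: "z = of_int m"
    by (rule Ints_cases)
  with assms have "of_int (m * int n) \<le> y * real n"
    by (simp add: mult_right_mono)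
  then have "m * int n \<le> \<lfloor>y * real n\<rfloor>"
    by (simp only: le_floor_iff)
  then have "z * real n \<le> \<lfloor>y * real n\<rfloor>"
    unfolding m by (metis of_int_le_iff of_int_mult of_int_of_nat_eq)
  with \<open>n > 0\<close> show ?thesis
    by (simp add: pos_le_divide_eq)
qed

definition btilde_coeff :: "nat \<Rightarrow> (real \<Rightarrow> real) \<Rightarrow> nat \<Rightarrow> real" where
  "btilde_coeff n f k = \<lfloor>f (real k / real n) * real (n choose k)\<rfloor>"

lemma Btilde_eq_bernstein_sum:
  "Btilde n f = (\<lambda>x. \<Sum>k=0..n. btilde_coeff n f k * x^k * (1-x)^(n-k))"
  by (simp add: fun_eq_iff Btilde_def btilde_coeff_def)

lemma btilde_coeff_ratio_le:
  "k \<le> n \<Longrightarrow> btilde_coeff n f k / (n choose k) \<le> f (real k / real n)"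
  unfolding btilde_coeff_def by (rule floor_mult_divide_le) simp

lemma btilde_coeff_ratio_gt:
  "k \<le> n \<Longrightarrow> f (real k / real n) - 1 / (n choose k) < btilde_coeff n f k / (n choose k)"
  unfolding btilde_coeff_def by (rule floor_mult_divide_gt) simp

lemma btilde_coeff_ratio_Ints:
  "f (real k / real n) \<in> \<int> \<Longrightarrow> k \<le> n \<Longrightarrow> btilde_coeff n f k / (n choose k) = f (real k / real n)"
  unfolding btilde_coeff_def by simp

lemma grid_point_mem_inner:
  assumes "1 \<le> k" and "k < n"
  shows "real k / real n \<in> {1 / real n..1 - 1 / real n}"
proof -
  have "real k + 1 \<le> real n" "1 \<le> real k"
    using assms by simp_all
  then show ?thesis
    by (simp add: field_simps)
qed

lemma btilde_coeff_ratio_mono_first: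
  assumes "n \<ge> 1" and "f 0 \<in> \<int>" and "mono_on {0..1 / real n} f"
  shows "btilde_coeff n f 0 / (n choose 0) \<le> btilde_coeff n f 1 / (n choose 1)"
proof -
  have "btilde_coeff n f 0 / (n choose 0) = f 0"
    using assms(2) btilde_coeff_ratio_Ints[of f 0 n] by simp
  also have "\<dots> \<le> \<lfloor>f (1 / real n) * real n\<rfloor> / real n"
    using assms by (intro Ints_le_floor_mult_divide mono_onD[OF assms(3)]) auto
  also have "\<dots> = btilde_coeff n f 1 / (n choose 1)"
    by (simp add: btilde_coeff_def)
  finally show ?thesis .
qed

lemma btilde_coeff_ratio_mono_last:
  assumes "Suc k = n" and "f 1 \<in> \<int>" and "mono_on {1 - 1 / real n..1} f"
  shows "btilde_coeff n f k / (n choose k) \<le> btilde_coeff n f n / (n choose n)"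
proof -
  have "btilde_coeff n f k / (n choose k) \<le> f (real k / real n)"
    using assms(1) by (intro btilde_coeff_ratio_le) simp
  also have "\<dots> \<le> f 1"
    using assms(1) by (intro mono_onD[OF assms(3)]) (auto simp: field_simps)
  also have "\<dots> = btilde_coeff n f n / (n choose n)"
    using assms(1,2) btilde_coeff_ratio_Ints[of f n n] by simp
  finally show ?thesis .
qed

lemma btilde_coeff_ratio_mono_inner:
  fixes f \<phi> :: "real \<Rightarrow> real"
  assumes "Suc k \<le> n"
    and "1 / (n choose Suc k) \<le> \<phi> (real (Suc k) / real n) - \<phi> (real k / real n)"
    and "f (real k / real n) - \<phi> (real k / real n)
      \<le> f (real (Suc k) / real n) - \<phi> (real (Suc k) / real n)"
  shows "btilde_coeff n f k / (n choose k) \<le> btilde_coeff n f (Suc k) / (n choose Suc k)"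
proof -
  have "btilde_coeff n f k / (n choose k) \<le> f (real k / real n)"
    using assms(1) by (intro btilde_coeff_ratio_le) simp
  also have "\<dots> \<le> f (real (Suc k) / real n) - 1 / (n choose Suc k)"
    using assms(2,3) by simp
  also have "\<dots> < btilde_coeff n f (Suc k) / (n choose Suc k)"
    using assms(1) by (rule btilde_coeff_ratio_gt)
  finally show ?thesis
    by simp
qed

lemma btilde_coeff_ratio_mono:
  fixes f \<phi> :: "real \<Rightarrow> real" and n k :: nat
  assumes "k < n"
    and "f 0 \<in> \<int>" and "f 1 \<in> \<int>"
    and \<phi>_increments: "n \<ge> 3 \<longrightarrow> (\<forall>k\<in>{1..n-2}.
           \<phi> (real (k+1) / real n) - \<phi> (real k / real n) \<ge> 1 / real (n choose (k+1)))"
    and "mono_on {0..1 / real n} f"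
    and "mono_on {1 - 1 / real n..1} f"
    and mono_inner: "n \<ge> 3 \<longrightarrow> mono_on {1 / real n..1 - 1 / real n} (\<lambda>x. f x - \<phi> x)"
  shows "btilde_coeff n f k / (n choose k) \<le> btilde_coeff n f (Suc k) / (n choose Suc k)"
proof -
  consider "k = 0" | "Suc k = n" | "1 \<le> k" "Suc k < n"
    using \<open>k < n\<close> by linarith
  then show ?thesis
  proof cases
    case 1
    with assms show ?thesis
      using btilde_coeff_ratio_mono_first by simp
  next
    case 2
    with assms show ?thesis
      using btilde_coeff_ratio_mono_last by simp
  next
    case 3
    then have "n \<ge> 3" "k \<in> {1..n-2}"
      by auto
    have "f (real k / real n) - \<phi> (real k / real n)
      \<le> f (real (Suc k) / real n) - \<phi> (real (Suc k) / real n)"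
      using 3 by (intro mono_onD[OF mono_inner[rule_format, OF \<open>n \<ge> 3\<close>]]
          grid_point_mem_inner divide_right_mono) auto
    with 3 \<open>n \<ge> 3\<close> \<open>k \<in> {1..n-2}\<close> show ?thesis
      using \<phi>_increments by (intro btilde_coeff_ratio_mono_inner) auto
  qed
qed

theorem proposition2p2:
  fixes f \<phi> :: "real \<Rightarrow> real" and n :: nat
  assumes "n \<ge> 1"
    and "f 0 \<in> \<int>" and "f 1 \<in> \<int>"
    and "n \<ge> 3 \<longrightarrow> (\<forall>k\<in>{1..n-2}.
           \<phi> (real (k+1) / real n) - \<phi> (real k / real n) \<ge> 1 / real (n choose (k+1)))"
    and "mono_on {0..1 / real n} f"
    and "mono_on {1 - 1 / real n..1} f"
    and "n \<ge> 3 \<longrightarrow> mono_on {1 / real n..1 - 1 / real n} (\<lambda>x. f x - \<phi> x)"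
  shows "mono_on {0..1} (Btilde n f)"
  unfolding Btilde_eq_bernstein_sum
  using btilde_coeff_ratio_mono[OF _ assms(2-7)]
  by (rule mono_on_bernstein_sum)

end
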